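(* Let $L$ be a finite graded atomic lattice with a sheaf $F$ of finite-dimensional vector spaces and let $\widetilde L$ be its Boolean cover with induced sheaf $F$. Then $$\chi\,\mathrm{HC}_*(\widetilde L;F)=\chi'_{(L,F)}(1)=\sum_{x\in L}\mu_L(\mathbf{0},x)\dim F(x),$$ where $\chi'_{(L,F)}$ is the derivative of $\chi_{(L,F)}(t)=\sum_{x\in L}\mu_L(\mathbf{0},x)t^{\dim F(x)}$.
   Context: Graded atomic lattice: finite lattice with minimum $\mathbf{0}$ and rank function ($rk(\mathbf{0})=0$) in which every element is a join of atoms (rank-$1$ elements). Möbius function: $\mu_L(x,x)=1$, $\mu_L(x,y)=-\sum_{x\le z<y}\mu_L(x,z)$. A sheaf assigns a vector space $F(x)$ to each element and a linear map $F^y_x:F(y)\to F(x)$ for $x\le y$, functorially. $\chi\,\mathrm{HC}_*=\sum_n(-1)^n\dim\mathrm{HC}_n$. Boolean cover: $\widetilde L$ is the lattice of subsets of the atoms of $L$, $f(S)=$ join of $S$ in $L$, induced sheaf $F(S)=F(f(S))$ with maps $F^{f(T)}_{f(S)}$. $\mathrm{HC}_*$ of a Boolean lattice of subsets of $\{a_1,\dots,a_n\}$ with sheaf $G$: homology of $C_k=\bigoplus_{|x|=k}G(x)$, $d=\sum\varepsilon^x_yG^x_y$ over $y\subset x$, $|y|=|x|-1$, $\varepsilon^x_y=(-1)^{j-1}$ when $x=\{a_{i_1},\dots,a_{i_k}\}$ ($i_1<\cdots<i_k$), $y=x\setminus\{a_{i_j}\}$. *)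

theory Defs
  imports Main "HOL-Library.Function_Algebras" "HOL-Computational_Algebra.Polynomial"
begin

function mobius :: "'l::{finite,order} \<Rightarrow> 'l \<Rightarrow> int" where
  "mobius x y = (if x = y then 1 else if x \<le> y
      then - (\<Sum>z\<in>{z. x \<le> z \<and> z < y}. mobius x z) else 0)"
  by auto
termination
proof (relation "measure (\<lambda>(x, y). card {w. w < y})")
  show "wf (measure (\<lambda>(x, y). card {w. w < y}))" by simp
next
  fix x y z :: "'a::{finite,order}"
  assume "z \<in> {z. x \<le> z \<and> z < y}"
  then have zy: "z < y" by simp
  have "{w. w < z} \<subset> {w. w < y}"
    using zy less_trans less_irrefl by blast
  then have "card {w. w < z} < card {w. w < y}"
    by (intro psubset_card_mono) auto
  then show "((x, z), x, y) \<in> measure (\<lambda>(x, y). card {w. w < y})" by simp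
qed

declare mobius.simps [simp del]

definition covers :: "'l::order \<Rightarrow> 'l \<Rightarrow> bool" where
  "covers x y \<longleftrightarrow> x < y \<and> \<not> (\<exists>z. x < z \<and> z < y)"

definition graded_by :: "('l::complete_lattice \<Rightarrow> nat) \<Rightarrow> bool" where
  "graded_by rk \<longleftrightarrow> rk bot = 0 \<and> (\<forall>x y. covers x y \<longrightarrow> rk y = rk x + 1)"

definition atoms_of :: "('l \<Rightarrow> nat) \<Rightarrow> 'l set" where
  "atoms_of rk = {a. rk a = 1}"

definition atomic_wrt :: "('l::complete_lattice \<Rightarrow> nat) \<Rightarrow> bool" where
  "atomic_wrt rk \<longleftrightarrow> (\<forall>x. \<exists>S \<subseteq> atoms_of rk. x = Sup S)"

definition lin_on :: "('k \<Rightarrow> 'v \<Rightarrow> 'v) \<Rightarrow> 'v set \<Rightarrow> ('v::ab_group_add \<Rightarrow> 'v) \<Rightarrow> bool" where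
  "lin_on scale V f \<longleftrightarrow>
     (\<forall>u\<in>V. \<forall>v\<in>V. f (u + v) = f u + f v) \<and> (\<forall>c. \<forall>u\<in>V. f (scale c u) = scale c (f u))"

definition is_sheaf ::
  "('k::field \<Rightarrow> 'v::ab_group_add \<Rightarrow> 'v) \<Rightarrow> ('l::order \<Rightarrow> 'v set) \<Rightarrow> ('l \<Rightarrow> 'l \<Rightarrow> 'v \<Rightarrow> 'v) \<Rightarrow> bool" where
  "is_sheaf scale F \<phi> \<longleftrightarrow>
     (\<forall>x. module.subspace scale (F x) \<and> (\<exists>B. finite B \<and> B \<subseteq> F x \<and> F x \<subseteq> module.span scale B)) \<and>
     (\<forall>x y. x \<le> y \<longrightarrow> lin_on scale (F y) (\<phi> y x) \<and> \<phi> y x ` F y \<subseteq> F x) \<and>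
     (\<forall>x. \<forall>v\<in>F x. \<phi> x x v = v) \<and>
     (\<forall>x y z. x \<le> y \<longrightarrow> y \<le> z \<longrightarrow> (\<forall>v\<in>F z. \<phi> y x (\<phi> z y v) = \<phi> z x v))"

(* Boolean cover: chains C_k = direct sum over k-subsets S of the atoms of F(join S);
   an element of C_k is a function from subsets of atoms to vectors, supported on k-subsets. *)
definition bchain :: "'l set \<Rightarrow> ('l::complete_lattice \<Rightarrow> 'v set) \<Rightarrow> nat \<Rightarrow> ('l set \<Rightarrow> 'v::zero) set" where
  "bchain A F k = {c. \<forall>S. c S \<in> (if S \<subseteq> A \<and> card S = k then F (Sup S) else {0})}"

(* sign (-1)^(j-1), j = position of atom a in the ordered set x (order given by ord) *)
definition bsign :: "('l \<Rightarrow> nat) \<Rightarrow> 'l set \<Rightarrow> 'l \<Rightarrow> nat" where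
  "bsign ord x a = card {b\<in>x. ord b < ord a}"

definition bdiff ::
  "('k::field \<Rightarrow> 'v::ab_group_add \<Rightarrow> 'v) \<Rightarrow> 'l set \<Rightarrow> ('l \<Rightarrow> nat) \<Rightarrow> ('l::complete_lattice \<Rightarrow> 'l \<Rightarrow> 'v \<Rightarrow> 'v)
     \<Rightarrow> nat \<Rightarrow> ('l set \<Rightarrow> 'v) \<Rightarrow> ('l set \<Rightarrow> 'v)" where
  "bdiff scale A ord \<phi> k c = (\<lambda>T.
     if T \<subseteq> A \<and> card T + 1 = k then
       (\<Sum>a\<in>A - T. scale ((-1) ^ bsign ord (insert a T) a)
                        (\<phi> (Sup (insert a T)) (Sup T) (c (insert a T))))
     else 0)"

definition cscale :: "('k \<Rightarrow> 'v \<Rightarrow> 'v) \<Rightarrow> 'k \<Rightarrow> ('l set \<Rightarrow> 'v) \<Rightarrow> ('l set \<Rightarrow> 'v)" where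
  "cscale scale c f = (\<lambda>S. scale c (f S))"

definition bcycles where
  "bcycles scale A ord F \<phi> k = {c \<in> bchain A F k. k = 0 \<or> bdiff scale A ord \<phi> k c = (\<lambda>_. 0)}"

definition bbounds where
  "bbounds scale A ord F \<phi> k = bdiff scale A ord \<phi> (Suc k) ` bchain A F (Suc k)"

definition HC_dim where
  "HC_dim scale A ord F \<phi> k =
     int (vector_space.dim (cscale scale) (bcycles scale A ord F \<phi> k))
   - int (vector_space.dim (cscale scale) (bbounds scale A ord F \<phi> k))"

(* Euler characteristic sum_n (-1)^n dim HC_n (HC_n = 0 for n > |A|) *)
definition euler_HC where
  "euler_HC scale A ord F \<phi> = (\<Sum>n\<le>card A. (-1) ^ n * HC_dim scale A ord F \<phi> n)"

definition chi_poly :: "('k::field \<Rightarrow> 'v::ab_group_add \<Rightarrow> 'v) \<Rightarrow> ('l::{finite,complete_lattice} \<Rightarrow> 'v set) \<Rightarrow> int poly" where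
  "chi_poly scale F = (\<Sum>x\<in>UNIV. monom (mobius bot x) (vector_space.dim scale (F x)))"

end

theory Submission
  imports Defs
begin

(* The Euler characteristic of a bounded complex of finite-dimensional spaces is the alternating
   sum of the dimensions of its chain spaces (rank-nullity for each differential), so it does not
   depend on the differential at all; in particular neither the ordering of the atoms nor the
   functoriality of the sheaf plays a role. The k-th chain space of the Boolean cover is the direct
   sum of the stalks F(\<Squnion>S) over the k-sets S of atoms, hence
   \<chi> = \<Sum>_{S \<subseteq> atoms} (-1)^|S| dim F(\<Squnion>S). Grouping the sets S by their join and applying
   Rota's cross-cut theorem \<Sum>_{\<Squnion>S = x} (-1)^|S| = \<mu>(0,x) yields \<Sum>_x \<mu>(0,x) dim F(x), which is
   the derivative of \<chi>_(L,F) at 1. *)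

lemma vector_space_cscale:
  assumes "vector_space scale"
  shows "vector_space (cscale scale)"
proof -
  interpret vector_space scale by fact
  show ?thesis
    by unfold_locales (auto simp: cscale_def fun_eq_iff scale_right_distrib scale_left_distrib)
qed

lemma (in vector_space) eq_0_if_in_span_disjoint_parts:
  assumes "independent B" "S \<subseteq> B" "T \<subseteq> B" "S \<inter> T = {}"
    and "x \<in> span S" "x \<in> span T"
  shows "x = 0"
proof -
  have "representation B x b = 0" for b
    using representation_extend[OF assms(1) assms(5,2)] representation_extend[OF assms(1) assms(6,3)]
      representation_ne_zero[of S x b] representation_ne_zero[of T x b] assms(4) by auto
  then show ?thesis
    using sum_nonzero_representation_eq[OF assms(1), of x] span_mono[OF assms(2)] assms(5) by auto
qed

context vector_space_pair
begin

lemma dim_eq_dim_kernel_add_dim_image: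
  assumes g: "Vector_Spaces.linear s1 s2 g" and V: "vs1.subspace V" "finite B0" "V \<subseteq> vs1.span B0"
  shows "vs1.dim V = vs1.dim {x\<in>V. g x = 0} + vs2.dim (g ` V)"
proof -
  interpret g: Vector_Spaces.linear s1 s2 g by fact
  \<comment> \<open>extend a basis BK of the kernel to a basis B of V;
    g maps D = B - BK injectively onto a basis of the image\<close>
  define K where "K = {x\<in>V. g x = 0}"
  obtain BK where BK: "BK \<subseteq> K" "vs1.independent BK" "K \<subseteq> vs1.span BK" "card BK = vs1.dim K"
    by (rule vs1.basis_exists)
  obtain B where B: "BK \<subseteq> B" "B \<subseteq> V" "vs1.independent B" "V \<subseteq> vs1.span B"
    using vs1.maximal_independent_subset_extend[of BK V] BK(1,2) K_def by blast
  have "finite B"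
    using vs1.independent_span_bound[OF V(2) B(3)] B(2) V(3) by blast
  have V_eq: "V = vs1.span B"
    using vs1.span_minimal[OF B(2) V(1)] B(4) by blast
  define D where "D = B - BK"
  have g_BK: "g ` BK \<subseteq> {0}"
    using BK(1) K_def by auto
  have image: "g ` V = vs2.span (g ` D)"
  proof -
    have "g ` B \<subseteq> insert 0 (g ` D)"
      using g_BK D_def by auto
    then have "vs2.span (g ` B) \<subseteq> vs2.span (g ` D)"
      using vs2.span_mono[of "g ` B" "insert 0 (g ` D)"] by simp
    moreover have "vs2.span (g ` D) \<subseteq> vs2.span (g ` B)"
      by (rule vs2.span_mono) (auto simp: D_def)
    ultimately show ?thesis
      unfolding V_eq g.span_image by blast
  qed
  have "inj_on g (vs1.span D)"
    unfolding g.inj_on_iff_eq_0[OF vs1.subspace_span]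
  proof (intro ballI impI)
    fix x assume x: "x \<in> vs1.span D" "g x = 0"
    have "x \<in> V"
      using x(1) vs1.span_mono[of D B] V_eq D_def by auto
    then have "x \<in> vs1.span BK"
      using x(2) BK(3) K_def by auto
    then show "x = 0"
      using vs1.eq_0_if_in_span_disjoint_parts[OF B(3) _ B(1) _ x(1)] D_def by auto
  qed
  moreover have "vs1.independent D"
    using vs1.independent_mono[OF B(3)] D_def by blast
  ultimately have "vs2.independent (g ` D)" "card (g ` D) = card D"
    using g.independent_injective_image card_image inj_on_subset[OF _ vs1.span_superset] by blast+
  then have "vs2.dim (g ` V) = card D"
    unfolding image vs2.dim_span by (simp add: vs2.dim_eq_card_independent)
  moreover have "vs1.dim V = card B"
    using vs1.basis_card_eq_dim[OF B(2,4,3)] ..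
  moreover have "card B = card BK + card D"
    using card_Diff_subset[OF _ B(1)] card_mono[OF \<open>finite B\<close> B(1)]
      finite_subset[OF B(1) \<open>finite B\<close>]
    unfolding D_def by simp
  ultimately show ?thesis
    using BK(4) K_def by simp
qed

lemma linear_extension_from_subspace:
  assumes V: "vs1.subspace V"
    and add: "\<forall>x\<in>V. \<forall>y\<in>V. f (x + y) = f x + f y"
    and scale: "\<forall>c. \<forall>x\<in>V. f (c *a x) = c *b f x"
  obtains g where "Vector_Spaces.linear s1 s2 g" "\<And>x. x \<in> V \<Longrightarrow> g x = f x"
proof -
  obtain B where B: "B \<subseteq> V" "vs1.independent B" "V \<subseteq> vs1.span B"
    by (rule vs1.maximal_independent_subset)
  define g where "g = construct B f"
  have g: "Vector_Spaces.linear s1 s2 g"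
    unfolding g_def using B(2) by (rule linear_construct)
  interpret g: Vector_Spaces.linear s1 s2 g by fact
  have "f (0 + 0) = f 0 + f 0"
    using add vs1.subspace_0[OF V] by blast
  then have "f 0 = 0"
    by simp
  then have "vs1.subspace {x\<in>V. g x = f x}"
    using add scale vs1.subspace_0[OF V] vs1.subspace_add[OF V] vs1.subspace_scale[OF V]
    unfolding vs1.subspace_def by (simp add: g.add g.scale g.zero)
  moreover have "B \<subseteq> {x\<in>V. g x = f x}"
    using B(1,2) construct_basis by (auto simp: g_def)
  ultimately have "vs1.span B \<subseteq> {x\<in>V. g x = f x}"
    by (rule vs1.span_minimal[rotated])
  then show ?thesis
    using that[OF g] B(3) by blast
qed

lemma dim_eq_dim_kernel_add_dim_image_on:
  assumes V: "vs1.subspace V" "finite B0" "V \<subseteq> vs1.span B0"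
    and add: "\<forall>x\<in>V. \<forall>y\<in>V. f (x + y) = f x + f y"
    and scale: "\<forall>c. \<forall>x\<in>V. f (c *a x) = c *b f x"
  shows "vs1.dim V = vs1.dim {x\<in>V. f x = 0} + vs2.dim (f ` V)"
proof -
  obtain g where g: "Vector_Spaces.linear s1 s2 g" "\<And>x. x \<in> V \<Longrightarrow> g x = f x"
    using linear_extension_from_subspace[OF V(1) add scale] by blast
  have "{x\<in>V. g x = 0} = {x\<in>V. f x = 0}" "g ` V = f ` V"
    using g(2) by auto
  then show ?thesis
    using dim_eq_dim_kernel_add_dim_image[OF g(1) V] by simp
qed

end

definition direct_sum :: "'i set \<Rightarrow> ('i \<Rightarrow> 'v set) \<Rightarrow> ('i \<Rightarrow> 'v::zero) set" where
  "direct_sum I V = {c. \<forall>i. c i \<in> (if i \<in> I then V i else {0})}"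

lemma mem_direct_sum_iff:
  "c \<in> direct_sum I V \<longleftrightarrow> (\<forall>i\<in>I. c i \<in> V i) \<and> (\<forall>i. i \<notin> I \<longrightarrow> c i = 0)"
  by (auto simp: direct_sum_def)

lemma direct_sum_empty: "direct_sum {} V = {0}"
  by (auto simp: mem_direct_sum_iff fun_eq_iff)

lemma direct_sum_insert_kernel:
  assumes "j \<notin> I" "0 \<in> V j"
  shows "{c \<in> direct_sum (insert j I) V. c j = 0} = direct_sum I V"
  using assms unfolding set_eq_iff by (simp only: mem_Collect_eq mem_direct_sum_iff) (metis insertCI insertE)

lemma image_eval_direct_sum:
  assumes "j \<in> I" "\<And>i. i \<in> I \<Longrightarrow> 0 \<in> V i"
  shows "(\<lambda>c. c j) ` direct_sum I V = V j"
proof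
  show "V j \<subseteq> (\<lambda>c. c j) ` direct_sum I V"
  proof
    fix v assume "v \<in> V j"
    then have "(\<lambda>_. 0)(j := v) \<in> direct_sum I V"
      using assms by (simp add: mem_direct_sum_iff)
    then show "v \<in> (\<lambda>c. c j) ` direct_sum I V"
      by (rule rev_image_eqI) simp
  qed
qed (use assms in \<open>auto simp: mem_direct_sum_iff\<close>)

lemma sum_fun_apply: "(\<Sum>i\<in>I. f i) x = (\<Sum>i\<in>I. f i x)"
  by (induction I rule: infinite_finite_induct) auto

context vector_space
begin

lemma dim_zero: "dim {0} = 0"
  using dim_span[of "{}"] dim_eq_card_independent[OF independent_empty] by (simp add: span_empty)

lemma subspace_direct_sum:
  assumes "\<And>i. i \<in> I \<Longrightarrow> subspace (V i)"
  shows "module.subspace (cscale scale) (direct_sum I V)"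
proof -
  interpret chains: vector_space "cscale scale"
    by (rule vector_space_cscale) unfold_locales
  show ?thesis
    using assms by (auto simp: chains.subspace_def mem_direct_sum_iff cscale_def subspace_def)
qed

lemma direct_sum_subset_span:
  assumes "finite I" "\<And>i. i \<in> I \<Longrightarrow> V i \<subseteq> span (B i)"
  shows "direct_sum I V \<subseteq> module.span (cscale scale) (\<Union>i\<in>I. (\<lambda>v. (\<lambda>_. 0)(i := v)) ` B i)"
proof
  interpret chains: vector_space "cscale scale"
    by (rule vector_space_cscale) unfold_locales
  fix c assume c: "c \<in> direct_sum I V"
  have "c = (\<Sum>i\<in>I. (\<lambda>_. 0)(i := c i))"
    using c \<open>finite I\<close> by (auto simp: fun_eq_iff sum_fun_apply mem_direct_sum_iff)
  also have "\<dots> \<in> chains.span (\<Union>i\<in>I. (\<lambda>v. (\<lambda>_. 0)(i := v)) ` B i)"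
  proof (rule chains.span_sum)
    fix i assume i: "i \<in> I"
    interpret single: Vector_Spaces.linear scale "cscale scale" "\<lambda>v. (\<lambda>_. 0)(i := v)"
      by unfold_locales (auto simp: fun_eq_iff cscale_def scale_right_distrib)
    have "(\<lambda>_. 0)(i := c i) \<in> chains.span ((\<lambda>v. (\<lambda>_. 0)(i := v)) ` B i)"
      using single.spans_image[OF assms(2)[OF i]] c i by (auto simp: mem_direct_sum_iff)
    also have "\<dots> \<subseteq> chains.span (\<Union>i\<in>I. (\<lambda>v. (\<lambda>_. 0)(i := v)) ` B i)"
      using i by (intro chains.span_mono) blast
    finally show "(\<lambda>_. 0)(i := c i) \<in> chains.span (\<Union>i\<in>I. (\<lambda>v. (\<lambda>_. 0)(i := v)) ` B i)" .
  qed
  finally show "c \<in> chains.span (\<Union>i\<in>I. (\<lambda>v. (\<lambda>_. 0)(i := v)) ` B i)" .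
qed

lemma dim_direct_sum:
  assumes "finite I" "\<And>i. i \<in> I \<Longrightarrow> subspace (V i)"
    and "\<And>i. i \<in> I \<Longrightarrow> finite (B i)" "\<And>i. i \<in> I \<Longrightarrow> V i \<subseteq> span (B i)"
  shows "vector_space.dim (cscale scale) (direct_sum I V) = (\<Sum>i\<in>I. dim (V i))"
proof -
  interpret chains: vector_space "cscale scale"
    by (rule vector_space_cscale) unfold_locales
  interpret pair: vector_space_pair "cscale scale" scale ..
  interpret eval: Vector_Spaces.linear "cscale scale" scale "\<lambda>c. c j" for j
    by unfold_locales (auto simp: cscale_def)
  show ?thesis
    using assms
  proof (induction I rule: finite_induct)
    case empty
    show ?case
      by (simp add: chains.dim_zero direct_sum_empty)
  next
    case (insert j I)
    let ?V = "direct_sum (insert j I) V"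
    have zero: "0 \<in> V i" if "i \<in> insert j I" for i
      using insert.prems(1)[OF that] by (rule subspace_0)
    have "{c \<in> ?V. c j = 0} = direct_sum I V"
      using insert.hyps(2) zero by (intro direct_sum_insert_kernel) auto
    moreover have "(\<lambda>c. c j) ` ?V = V j"
      using zero by (intro image_eval_direct_sum) auto
    moreover have "chains.dim ?V = chains.dim {c \<in> ?V. c j = 0} + dim ((\<lambda>c. c j) ` ?V)"
    proof (rule pair.dim_eq_dim_kernel_add_dim_image)
      show "chains.subspace ?V"
        using insert.prems(1) by (rule subspace_direct_sum)
      show "?V \<subseteq> chains.span (\<Union>i\<in>insert j I. (\<lambda>v. (\<lambda>_. 0)(i := v)) ` B i)"
        using insert.hyps(1) insert.prems(3) by (intro direct_sum_subset_span) auto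
    qed (use insert.hyps(1) insert.prems(2) eval.linear_axioms in auto)
    ultimately have "chains.dim ?V = chains.dim (direct_sum I V) + dim (V j)"
      by simp
    then show ?case
      using insert by simp
  qed
qed

end

lemma sum_Pow_minus_one_power:
  assumes "finite S"
  shows "(\<Sum>T\<in>Pow S. (-1) ^ card T) = (if S = {} then 1 else (0::'a::ring_1))"
proof (cases "S = {}")
  case False
  then have "card {T \<in> Pow S. even (card T)} = card {T \<in> Pow S. odd (card T)}"
    using card_subsupersets_even_odd[OF assms, of "{}"] by auto
  then show ?thesis
    using False assms by (simp add: sum_alternating_cancels)
qed simp

lemma sum_mobius_bot_atMost:
  fixes x :: "'l::{finite,order_bot}"
  shows "(\<Sum>y | y \<le> x. mobius bot y) = (if x = bot then 1 else 0)"
proof (cases "x = bot")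
  case True
  then have "{y. y \<le> x} = {bot}"
    by (auto simp: bot_unique)
  then show ?thesis
    using True by (simp add: mobius.simps)
next
  case False
  have "{y. y \<le> x} = insert x {y. bot \<le> y \<and> y < x}"
    by auto
  moreover have "mobius bot x = - (\<Sum>y | bot \<le> y \<and> y < x. mobius bot y)"
    using False by (subst mobius.simps) simp
  ultimately show ?thesis
    using False by simp
qed

lemma card_strict_down_set_less:
  fixes x y :: "'l::{finite,order}"
  assumes "x < y"
  shows "card {w. w < x} < card {w. w < y}"
  using assms by (intro psubset_card_mono) (auto dest: less_trans)

lemma mobius_bot_unique:
  fixes g :: "'l::{finite,order_bot} \<Rightarrow> int"
  assumes "\<And>x. (\<Sum>y | y \<le> x. g y) = (if x = bot then 1 else 0)"
  shows "g x = mobius bot x"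
proof (induction x rule: measure_induct_rule[of "\<lambda>x. card {w. w < x}"])
  case (less x)
  have below: "{y. y \<le> x} = insert x {y. y < x}"
    by auto
  have "(\<Sum>y | y < x. g y) = (\<Sum>y | y < x. mobius bot y)"
    using less card_strict_down_set_less by (intro sum.cong) auto
  moreover have "g x + (\<Sum>y | y < x. g y) = mobius bot x + (\<Sum>y | y < x. mobius bot y)"
    using assms[of x] sum_mobius_bot_atMost[of x] unfolding below by simp
  ultimately show ?case
    by linarith
qed

lemma mobius_bot_eq_crosscut_sum:
  fixes A :: "'l::{finite,complete_lattice} set"
  assumes "bot \<notin> A" "\<And>x. \<exists>S\<subseteq>A. x = Sup S"
  shows "mobius bot x = (\<Sum>S | S \<subseteq> A \<and> Sup S = x. (-1) ^ card S)"
proof (rule mobius_bot_unique[symmetric])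
  fix x :: 'l
  have "(\<Sum>y | y \<le> x. \<Sum>S | S \<subseteq> A \<and> Sup S = y. (-1) ^ card S)
      = (\<Sum>y | y \<le> x. \<Sum>S | S \<in> {S. S \<subseteq> A \<and> Sup S \<le> x} \<and> Sup S = y. (-1::int) ^ card S)"
    by (intro sum.cong refl) auto
  also have "\<dots> = (\<Sum>S | S \<subseteq> A \<and> Sup S \<le> x. (-1) ^ card S)"
    by (rule sum.group) auto
  also have "{S. S \<subseteq> A \<and> Sup S \<le> x} = Pow {a \<in> A. a \<le> x}"
    by (auto simp: Sup_le_iff)
  also have "(\<Sum>S\<in>Pow {a \<in> A. a \<le> x}. (-1::int) ^ card S) = (if {a \<in> A. a \<le> x} = {} then 1 else 0)"
    by (rule sum_Pow_minus_one_power) simp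
  also have "{a \<in> A. a \<le> x} = {} \<longleftrightarrow> x = bot"
  proof
    assume none_below: "{a \<in> A. a \<le> x} = {}"
    obtain S where S: "S \<subseteq> A" "x = Sup S"
      using assms(2) by blast
    then have "S = {}"
      using none_below Sup_upper by blast
    then show "x = bot"
      using S by simp
  qed (use assms(1) in \<open>auto simp: bot_unique\<close>)
  finally show "(\<Sum>y | y \<le> x. \<Sum>S | S \<subseteq> A \<and> Sup S = y. (-1::int) ^ card S)
      = (if x = bot then 1 else 0)" .
qed

lemma sum_Pow_eq_sum_mobius_bot:
  fixes A :: "'l::{finite,complete_lattice} set" and f :: "'l \<Rightarrow> int"
  assumes "bot \<notin> A" "\<And>x. \<exists>S\<subseteq>A. x = Sup S"
  shows "(\<Sum>S\<in>Pow A. (-1) ^ card S * f (Sup S)) = (\<Sum>x\<in>UNIV. mobius bot x * f x)"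
proof -
  have "(\<Sum>S\<in>Pow A. (-1) ^ card S * f (Sup S))
      = (\<Sum>x\<in>UNIV. \<Sum>S | S \<in> Pow A \<and> Sup S = x. (-1) ^ card S * f (Sup S))"
    by (rule sum.group[symmetric]) auto
  also have "\<dots> = (\<Sum>x\<in>UNIV. mobius bot x * f x)"
    by (intro sum.cong refl) (simp add: mobius_bot_eq_crosscut_sum[OF assms] sum_distrib_right)
  finally show ?thesis .
qed

lemma pderiv_sum: "pderiv (\<Sum>x\<in>A. p x) = (\<Sum>x\<in>A. pderiv (p x))"
  by (induction A rule: infinite_finite_induct) (simp_all add: pderiv_add)

lemma poly_pderiv_chi_poly_one:
  "poly (pderiv (chi_poly scale F)) 1 = (\<Sum>x\<in>UNIV. mobius bot x * int (vector_space.dim scale (F x)))"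
  unfolding chi_poly_def pderiv_sum poly_sum pderiv_monom poly_monom by (simp add: mult.commute)

lemma alternating_sum_telescope:
  fixes z b c :: "nat \<Rightarrow> int"
  assumes "c 0 = z 0" "\<And>n. c (Suc n) = z (Suc n) + b n"
  shows "(\<Sum>n\<le>N. (-1) ^ n * (z n - b n)) = (\<Sum>n\<le>N. (-1) ^ n * c n) - (-1) ^ N * b N"
  by (induction N) (simp_all add: assms algebra_simps)

lemma bchain_eq_direct_sum: "bchain A F k = direct_sum {S. S \<subseteq> A \<and> card S = k} (\<lambda>S. F (Sup S))"
  unfolding bchain_def direct_sum_def by simp

lemma bchain_apply: "c \<in> bchain A F k \<Longrightarrow> S \<subseteq> A \<Longrightarrow> card S = k \<Longrightarrow> c S \<in> F (Sup S)"
  by (simp add: bchain_eq_direct_sum mem_direct_sum_iff)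

lemma bchain_above_card:
  assumes "finite A" "card A < k"
  shows "bchain A F k = {0}"
proof -
  have "{S. S \<subseteq> A \<and> card S = k} = {}"
    using assms(2) by (auto dest: card_mono[OF assms(1)])
  then show ?thesis
    unfolding bchain_eq_direct_sum by (simp only: direct_sum_empty)
qed

lemma finite_card_subsets: "finite A \<Longrightarrow> finite {S. S \<subseteq> A \<and> card S = k}"
  by (rule finite_subset[of _ "Pow A"]) auto

locale sheaf = vector_space scale
  for scale :: "'k::field \<Rightarrow> 'v::ab_group_add \<Rightarrow> 'v" +
  fixes F :: "'l::complete_lattice \<Rightarrow> 'v set" and \<phi> :: "'l \<Rightarrow> 'l \<Rightarrow> 'v \<Rightarrow> 'v"
  assumes is_sheaf: "is_sheaf scale F \<phi>"
begin

sublocale chains: vector_space "cscale scale"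
  by (rule vector_space_cscale) unfold_locales

lemma subspace_stalk: "subspace (F x)"
  using is_sheaf by (simp add: is_sheaf_def)

lemma finite_spanning_stalks: "\<exists>B. \<forall>x. finite (B x) \<and> F x \<subseteq> span (B x)"
proof -
  have "\<forall>x. \<exists>B. finite B \<and> F x \<subseteq> span B"
    using is_sheaf unfolding is_sheaf_def by meson
  then show ?thesis
    by (rule choice)
qed

lemma restriction_add:
  "x \<le> y \<Longrightarrow> u \<in> F y \<Longrightarrow> v \<in> F y \<Longrightarrow> \<phi> y x (u + v) = \<phi> y x u + \<phi> y x v"
  using is_sheaf by (simp add: is_sheaf_def lin_on_def)

lemma restriction_scale: "x \<le> y \<Longrightarrow> u \<in> F y \<Longrightarrow> \<phi> y x (scale r u) = scale r (\<phi> y x u)"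
  using is_sheaf by (simp add: is_sheaf_def lin_on_def)

lemma subspace_bchain: "chains.subspace (bchain A F k)"
  unfolding bchain_eq_direct_sum by (rule subspace_direct_sum) (rule subspace_stalk)

lemma dim_bchain:
  assumes "finite A"
  shows "chains.dim (bchain A F k) = (\<Sum>S | S \<subseteq> A \<and> card S = k. dim (F (Sup S)))"
proof -
  from finite_spanning_stalks obtain B where "\<forall>x. finite (B x) \<and> F x \<subseteq> span (B x)" ..
  then show ?thesis
    unfolding bchain_eq_direct_sum
    using dim_direct_sum[OF finite_card_subsets[OF assms],
        where V = "\<lambda>S. F (Sup S)" and B = "\<lambda>S. B (Sup S)"] subspace_stalk
    by blast
qed

lemma bchain_finite_span:
  assumes "finite A"
  shows "\<exists>B. finite B \<and> bchain A F k \<subseteq> chains.span B"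
proof -
  from finite_spanning_stalks obtain B where B: "\<forall>x. finite (B x) \<and> F x \<subseteq> span (B x)" ..
  let ?B = "\<Union>S\<in>{S. S \<subseteq> A \<and> card S = k}. (\<lambda>v. (\<lambda>_. 0)(S := v)) ` B (Sup S)"
  have "finite ?B"
    using finite_card_subsets[OF assms] B by blast
  moreover have "bchain A F k \<subseteq> chains.span ?B"
    unfolding bchain_eq_direct_sum using B by (intro direct_sum_subset_span finite_card_subsets assms) blast
  ultimately show ?thesis
    by blast
qed

lemma bchain_insert_apply:
  assumes "finite A" "c \<in> bchain A F (Suc n)" "T \<subseteq> A" "card T = n" "a \<in> A - T"
  shows "c (insert a T) \<in> F (Sup (insert a T))"
proof (rule bchain_apply[OF assms(2)])
  have "finite T"
    using assms(1,3) by (rule finite_subset[rotated])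
  then show "insert a T \<subseteq> A" "card (insert a T) = Suc n"
    using assms by auto
qed

lemma bdiff_add:
  assumes "finite A" "c \<in> bchain A F (Suc n)" "c' \<in> bchain A F (Suc n)"
  shows "bdiff scale A ord \<phi> (Suc n) (c + c')
       = bdiff scale A ord \<phi> (Suc n) c + bdiff scale A ord \<phi> (Suc n) c'"
proof
  fix T
  have "\<phi> (Sup (insert a T)) (Sup T) (c (insert a T) + c' (insert a T))
      = \<phi> (Sup (insert a T)) (Sup T) (c (insert a T)) + \<phi> (Sup (insert a T)) (Sup T) (c' (insert a T))"
    if "T \<subseteq> A" "card T = n" "a \<in> A - T" for a
    using bchain_insert_apply[OF assms(1,2) that] bchain_insert_apply[OF assms(1,3) that]
    by (intro restriction_add Sup_subset_mono) auto
  then show "bdiff scale A ord \<phi> (Suc n) (c + c') T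
      = (bdiff scale A ord \<phi> (Suc n) c + bdiff scale A ord \<phi> (Suc n) c') T"
    unfolding bdiff_def by (simp add: scale_right_distrib sum.distrib del: Sup_insert)
qed

lemma bdiff_scale:
  assumes "finite A" "c \<in> bchain A F (Suc n)"
  shows "bdiff scale A ord \<phi> (Suc n) (cscale scale r c)
       = cscale scale r (bdiff scale A ord \<phi> (Suc n) c)"
proof
  fix T
  have "\<phi> (Sup (insert a T)) (Sup T) (scale r (c (insert a T)))
      = scale r (\<phi> (Sup (insert a T)) (Sup T) (c (insert a T)))"
    if "T \<subseteq> A" "card T = n" "a \<in> A - T" for a
    using bchain_insert_apply[OF assms that] by (intro restriction_scale Sup_subset_mono) auto
  then show "bdiff scale A ord \<phi> (Suc n) (cscale scale r c) T
      = cscale scale r (bdiff scale A ord \<phi> (Suc n) c) T"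
    unfolding bdiff_def cscale_def by (simp add: scale_sum_right mult.commute del: Sup_insert)
qed

lemma dim_bchain_Suc_eq_cycles_add_boundaries:
  assumes "finite A"
  shows "chains.dim (bchain A F (Suc n))
       = chains.dim (bcycles scale A ord F \<phi> (Suc n)) + chains.dim (bbounds scale A ord F \<phi> n)"
proof -
  interpret chain_maps: vector_space_pair "cscale scale" "cscale scale" ..
  obtain B where "finite B" "bchain A F (Suc n) \<subseteq> chains.span B"
    using bchain_finite_span[OF assms] by blast
  then have "chains.dim (bchain A F (Suc n))
      = chains.dim {c \<in> bchain A F (Suc n). bdiff scale A ord \<phi> (Suc n) c = 0}
        + chains.dim (bdiff scale A ord \<phi> (Suc n) ` bchain A F (Suc n))"
    using subspace_bchain bdiff_add[OF assms] bdiff_scale[OF assms]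
    by (intro chain_maps.dim_eq_dim_kernel_add_dim_image_on) auto
  then show ?thesis
    unfolding bcycles_def bbounds_def zero_fun_def by simp
qed

lemma bbounds_above_card:
  assumes "finite A" "card A \<le> n"
  shows "bbounds scale A ord F \<phi> n = {0}"
proof -
  have chain: "bchain A F (Suc n) = {0}"
    using assms by (intro bchain_above_card) auto
  then have "bdiff scale A ord \<phi> (Suc n) (0 + 0)
      = bdiff scale A ord \<phi> (Suc n) 0 + bdiff scale A ord \<phi> (Suc n) 0"
    using bdiff_add[OF assms(1)] by blast
  then show ?thesis
    unfolding bbounds_def chain by simp
qed

lemma euler_HC_eq_alternating_sum_dim_stalks:
  assumes "finite A"
  shows "euler_HC scale A ord F \<phi> = (\<Sum>S\<in>Pow A. (-1) ^ card S * int (dim (F (Sup S))))"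
proof -
  define z where "z n = int (chains.dim (bcycles scale A ord F \<phi> n))" for n
  define b where "b n = int (chains.dim (bbounds scale A ord F \<phi> n))" for n
  define c where "c n = int (chains.dim (bchain A F n))" for n
  have "euler_HC scale A ord F \<phi> = (\<Sum>n\<le>card A. (-1) ^ n * (z n - b n))"
    unfolding euler_HC_def HC_dim_def z_def b_def ..
  also have "\<dots> = (\<Sum>n\<le>card A. (-1) ^ n * c n) - (-1) ^ card A * b (card A)"
    by (rule alternating_sum_telescope)
      (simp_all add: c_def z_def b_def bcycles_def[of _ _ _ _ _ 0]
        dim_bchain_Suc_eq_cycles_add_boundaries[OF assms, where ord = ord])
  also have "b (card A) = 0"
    unfolding b_def bbounds_above_card[OF assms order_refl] chains.dim_zero by simp
  also have "(\<Sum>n\<le>card A. (-1) ^ n * c n)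
      = (\<Sum>n\<le>card A. \<Sum>S | S \<in> Pow A \<and> card S = n. (-1) ^ card S * int (dim (F (Sup S))))"
    by (simp add: c_def dim_bchain[OF assms] sum_distrib_left)
  also have "\<dots> = (\<Sum>S\<in>Pow A. (-1) ^ card S * int (dim (F (Sup S))))"
    using assms by (intro sum.group) (auto simp: card_mono)
  finally show ?thesis
    by simp
qed

end

theorem corollary4:
  fixes scale :: "'k::field \<Rightarrow> 'v::ab_group_add \<Rightarrow> 'v"
    and rk :: "'l::{finite,complete_lattice} \<Rightarrow> nat"
    and F :: "'l \<Rightarrow> 'v set"
    and \<phi> :: "'l \<Rightarrow> 'l \<Rightarrow> 'v \<Rightarrow> 'v"
    and ord :: "'l \<Rightarrow> nat"
  assumes "vector_space scale"
    and "graded_by rk"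
    and "atomic_wrt rk"
    and "is_sheaf scale F \<phi>"
    and "inj_on ord (atoms_of rk)"
  shows "euler_HC scale (atoms_of rk) ord F \<phi> = poly (pderiv (chi_poly scale F)) 1
       \<and> poly (pderiv (chi_poly scale F)) 1 = (\<Sum>x\<in>UNIV. mobius bot x * int (vector_space.dim scale (F x)))"
proof -
  interpret sheaf scale F \<phi>
    using assms(1,4) by (intro sheaf.intro sheaf_axioms.intro)
  have atoms: "bot \<notin> atoms_of rk" "\<And>x. \<exists>S\<subseteq>atoms_of rk. x = Sup S"
    using assms(2,3) by (auto simp: graded_by_def atoms_of_def atomic_wrt_def)
  have "euler_HC scale (atoms_of rk) ord F \<phi> = (\<Sum>x\<in>UNIV. mobius bot x * int (dim (F x)))"
    using euler_HC_eq_alternating_sum_dim_stalks[of "atoms_of rk" ord]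
      sum_Pow_eq_sum_mobius_bot[OF atoms] by simp
  then show ?thesis
    using poly_pderiv_chi_poly_one[of scale F] by simp
qed

end
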